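(* Let $(T,\leq)$ be an ordered set and let $T^\ast$ be its ultrapower with respect to an ultrafilter $\mathcal{U}$ on $\mathbb{N}$. The following are equivalent: (a) $T$ is dense everywhere, i.e. for all $a,b \in T$ with $a < b$ there exists $c \in T$ with $a < c < b$; (b) whenever $a_k = ((a_k)_n)$ and $b_k = ((b_k)_n)$ ($k\in\mathbb{N}$) are sequences in $T$ such that for every $k \in \mathbb{N}$ \[ \overline{a_k} \leq \overline{a_{k+1}} < \overline{b_{k+1}} \leq \overline{b_k}, \] then \[ \bigcap_{k\in\mathbb{N}} \, ]\overline{a_k}, \overline{b_k}[ \, \neq \emptyset, \] where $]x,y[ = \{ z \in T^\ast : x < z < y\}$.
   Context: An ordered set is a nonempty set with a reflexive, antisymmetric, transitive and linear (total) relation $\leq$. An ultrafilter on $\mathbb{N}$ is a nonempty family $\mathcal{U}$ of subsets of $\mathbb{N}$ such that: (1) $K \in \mathcal{U}$, $K \subset L \subset \mathbb{N}$ imply $L \in \mathcal{U}$; (2) $K,L \in \mathcal{U}$ imply $K\cap L \in \mathcal{U}$; (3) every $K \in \mathcal{U}$ is infinite; (4) for every $K \subset \mathbb{N}$, $K \in \mathcal{U}$ or $\mathbb{N}\setminus K \in \mathcal{U}$. The ultrapower $T^\ast$: on the set $\mathcal{T}$ of all sequences $(a_n):\mathbb{N}\to T$ define $(a_n)\sim(b_n)$ iff $\{n : a_n = b_n\} \in \mathcal{U}$; this is an equivalence relation, $T^\ast$ is the set of its classes, $\overline{(a_n)}$ denotes the class of $(a_n)$, and $T^\ast$ is ordered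 by $\overline{(a_n)} \leq \overline{(b_n)}$ iff $\{ n : a_n \leq b_n\} \in \mathcal{U}$ (a well-defined total order); $<$ denotes the corresponding strict order. *)

theory Defs
  imports Main
begin

text \<open>Ultrafilter on the naturals, exactly as in the paper (all members infinite,
 so it is a free ultrafilter).\<close>
definition ultrafilter_nat :: "nat set set \<Rightarrow> bool" where
  "ultrafilter_nat U \<longleftrightarrow>
     U \<noteq> {} \<and>
     (\<forall>K L. K \<in> U \<and> K \<subseteq> L \<longrightarrow> L \<in> U) \<and>
     (\<forall>K L. K \<in> U \<and> L \<in> U \<longrightarrow> K \<inter> L \<in> U) \<and>
     (\<forall>K \<in> U. infinite K) \<and>
     (\<forall>K. K \<in> U \<or> (UNIV - K) \<in> U)"

definition useq_rel :: "nat set set \<Rightarrow> ((nat \<Rightarrow> 'a) \<times> (nat \<Rightarrow> 'a)) set" where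
  "useq_rel U = {(a, b). {n. a n = b n} \<in> U}"

definition ultrapower :: "nat set set \<Rightarrow> (nat \<Rightarrow> 'a) set set" where
  "ultrapower U = (UNIV :: (nat \<Rightarrow> 'a) set) // useq_rel U"

definition ucls :: "nat set set \<Rightarrow> (nat \<Rightarrow> 'a) \<Rightarrow> (nat \<Rightarrow> 'a) set" where
  "ucls U a = useq_rel U `` {a}"

definition uleq :: "nat set set \<Rightarrow> (nat \<Rightarrow> 'a::linorder) set \<Rightarrow> (nat \<Rightarrow> 'a) set \<Rightarrow> bool" where
  "uleq U X Y \<longleftrightarrow> (\<exists>a \<in> X. \<exists>b \<in> Y. {n. a n \<le> b n} \<in> U)"

definition uless :: "nat set set \<Rightarrow> (nat \<Rightarrow> 'a::linorder) set \<Rightarrow> (nat \<Rightarrow> 'a) set \<Rightarrow> bool" where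
  "uless U X Y \<longleftrightarrow> uleq U X Y \<and> X \<noteq> Y"

definition uopen_interval :: "nat set set \<Rightarrow> (nat \<Rightarrow> 'a::linorder) set \<Rightarrow> (nat \<Rightarrow> 'a) set
    \<Rightarrow> (nat \<Rightarrow> 'a) set set" where
  "uopen_interval U X Y = {Z \<in> ultrapower U. uless U X Z \<and> uless U Z Y}"

end

theory Submission
  imports Defs
begin

(* Read the ultrafilter U as a filter on the naturals: statements about classes in the
   ultrapower become "eventually" statements about representatives. If T is dense, a point of
   all the intervals is built diagonally: at index n take the largest k <= n for which the first
   k nesting conditions hold at n and pick a point strictly between a_k(n) and b_k(n). Since U
   contains every cofinite set, for each fixed k almost every n has this largest index at least
   k + 1, so the point lies in the k-th interval. Conversely, constant sequences x < y give a
   class strictly between them, and any index where a representative lies strictly between x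
   and y yields a point of T between x and y. *)

definition ufilter :: "nat set set \<Rightarrow> nat filter" where
  "ufilter U = Abs_filter (\<lambda>P. {n. P n} \<in> U)"

lemma eventually_ufilter:
  assumes "ultrafilter_nat U"
  shows "eventually P (ufilter U) \<longleftrightarrow> {n. P n} \<in> U"
proof -
  have "is_filter (\<lambda>P. {n. P n} \<in> U)"
  proof
    show "{n. True} \<in> U"
      using assms unfolding ultrafilter_nat_def by blast
    show "{n. P n \<and> Q n} \<in> U" if "{n. P n} \<in> U" "{n. Q n} \<in> U" for P Q
      using assms that unfolding ultrafilter_nat_def Collect_conj_eq by blast
    show "{n. Q n} \<in> U" if "\<forall>n. P n \<longrightarrow> Q n" "{n. P n} \<in> U" for P Q
      using assms that unfolding ultrafilter_nat_def by (metis Collect_mono)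
  qed
  then show ?thesis
    unfolding ufilter_def by (rule eventually_Abs_filter)
qed

lemma ufilter_le_sequentially:
  assumes "ultrafilter_nat U"
  shows "ufilter U \<le> sequentially"
proof (rule filter_leI)
  fix P :: "nat \<Rightarrow> bool"
  assume "eventually P sequentially"
  then have "finite {n. \<not> P n}"
    by (simp add: eventually_cofinite flip: cofinite_eq_sequentially)
  moreover have "{n. \<not> P n} = UNIV - {n. P n}"
    by blast
  ultimately show "eventually P (ufilter U)"
    using assms unfolding eventually_ufilter[OF assms] ultrafilter_nat_def by metis
qed

lemma ufilter_neq_bot:
  assumes "ultrafilter_nat U"
  shows "ufilter U \<noteq> bot"
  using assms unfolding trivial_limit_def eventually_ufilter[OF assms] ultrafilter_nat_def
  by auto

lemma eventually_ufilter_not: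
  assumes "ultrafilter_nat U"
  shows "eventually (\<lambda>n. \<not> P n) (ufilter U) \<longleftrightarrow> \<not> eventually P (ufilter U)"
proof
  show "\<not> eventually P (ufilter U)" if "eventually (\<lambda>n. \<not> P n) (ufilter U)"
    using that ufilter_neq_bot[OF assms] eventually_happens'
    by (metis (mono_tags, lifting) eventually_conj)
  show "eventually (\<lambda>n. \<not> P n) (ufilter U)" if "\<not> eventually P (ufilter U)"
  proof -
    have "UNIV - {n. P n} = {n. \<not> P n}"
      by blast
    then show ?thesis
      using assms that unfolding eventually_ufilter[OF assms] ultrafilter_nat_def by metis
  qed
qed

lemma useq_rel_ufilter:
  assumes "ultrafilter_nat U"
  shows "useq_rel U = {(x, y). eventually (\<lambda>n. x n = y n) (ufilter U)}"
  unfolding useq_rel_def eventually_ufilter[OF assms] ..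

lemma equiv_useq_rel:
  assumes "ultrafilter_nat U"
  shows "equiv UNIV (useq_rel U)"
  unfolding useq_rel_ufilter[OF assms]
proof (rule equivI)
  show "refl {(x, y). \<forall>\<^sub>F n in ufilter U. x n = y n}"
    by (auto intro: reflI)
  show "sym {(x, y). \<forall>\<^sub>F n in ufilter U. x n = y n}"
    by (auto intro!: symI elim: eventually_mono)
  show "trans {(x, y). \<forall>\<^sub>F n in ufilter U. x n = y n}"
    by (auto intro!: transI elim: eventually_elim2)
qed simp

lemma ucls_eq_iff:
  assumes "ultrafilter_nat U"
  shows "ucls U x = ucls U y \<longleftrightarrow> eventually (\<lambda>n. x n = y n) (ufilter U)"
  using equiv_class_eq_iff[OF equiv_useq_rel[OF assms], of x y]
  unfolding ucls_def useq_rel_ufilter[OF assms] by simp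

lemma mem_ucls_iff:
  assumes "ultrafilter_nat U"
  shows "x \<in> ucls U y \<longleftrightarrow> eventually (\<lambda>n. x n = y n) (ufilter U)"
  unfolding ucls_def useq_rel_ufilter[OF assms] by (auto elim: eventually_mono)

lemma ultrapower_eq_range_ucls: "ultrapower U = range (ucls U)"
  unfolding ultrapower_def ucls_def quotient_def by blast

lemma uleq_ucls_iff:
  assumes "ultrafilter_nat U"
  shows "uleq U (ucls U x) (ucls U y) \<longleftrightarrow> eventually (\<lambda>n. x n \<le> y n) (ufilter U)"
proof
  assume "uleq U (ucls U x) (ucls U y)"
  then obtain x' y' where "eventually (\<lambda>n. x' n = x n) (ufilter U)"
    "eventually (\<lambda>n. y' n = y n) (ufilter U)" "eventually (\<lambda>n. x' n \<le> y' n) (ufilter U)"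
    unfolding uleq_def eventually_ufilter[OF assms, symmetric]
    by (auto simp: mem_ucls_iff[OF assms])
  then show "eventually (\<lambda>n. x n \<le> y n) (ufilter U)"
    by eventually_elim simp
next
  assume "eventually (\<lambda>n. x n \<le> y n) (ufilter U)"
  then show "uleq U (ucls U x) (ucls U y)"
    unfolding uleq_def eventually_ufilter[OF assms, symmetric]
    using mem_ucls_iff[OF assms, of x x] mem_ucls_iff[OF assms, of y y] by auto
qed

lemma uless_ucls_iff:
  assumes "ultrafilter_nat U"
  shows "uless U (ucls U x) (ucls U y) \<longleftrightarrow> eventually (\<lambda>n. x n < y n) (ufilter U)"
  unfolding uless_def uleq_ucls_iff[OF assms] ucls_eq_iff[OF assms]
    eventually_ufilter_not[OF assms, symmetric]
  by (auto simp: order.strict_iff_order elim: eventually_elim2 eventually_mono)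

lemma ucls_in_uopen_interval_iff:
  assumes "ultrafilter_nat U"
  shows "ucls U z \<in> uopen_interval U (ucls U x) (ucls U y) \<longleftrightarrow>
    eventually (\<lambda>n. x n < z n \<and> z n < y n) (ufilter U)"
  by (simp add: uopen_interval_def ultrapower_eq_range_ucls uless_ucls_iff[OF assms]
      eventually_conj_iff)

lemma nested_prefix_bounds:
  fixes a b :: "nat \<Rightarrow> 'a::preorder"
  assumes "\<And>j. j < m \<Longrightarrow> a j \<le> a (Suc j) \<and> b (Suc j) \<le> b j" and "k \<le> m"
  shows "a k \<le> a m \<and> b m \<le> b k"
  using assms(2)
proof (induction m rule: dec_induct)
  case base
  show ?case
    by simp
next
  case (step i)
  then show ?case
    using assms(1)[of i] by (meson order_trans)
qed

lemma nested_intervals_eventually_common_point: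
  fixes a b :: "nat \<Rightarrow> nat \<Rightarrow> 'a::linorder"
  assumes dense: "\<And>x y :: 'a. x < y \<Longrightarrow> \<exists>c. x < c \<and> c < y"
    and F: "F \<le> sequentially"
    and nested: "\<And>k. eventually (\<lambda>n. a k n \<le> a (Suc k) n \<and> a (Suc k) n < b (Suc k) n
      \<and> b (Suc k) n \<le> b k n) F"
  shows "\<exists>z. \<forall>k. eventually (\<lambda>n. a k n < z n \<and> z n < b k n) F"
proof -
  define step where "step j n \<longleftrightarrow>
    a j n \<le> a (Suc j) n \<and> a (Suc j) n < b (Suc j) n \<and> b (Suc j) n \<le> b j n" for j n
  define depth where "depth n = Max {i. i \<le> n \<and> (\<forall>j<i. step j n)}" for n
  \<comment> \<open>For depth n = 0 the choice below may be empty; such n are irrelevant for every interval.\<close>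
  define z where "z n = (SOME c. a (depth n) n < c \<and> c < b (depth n) n)" for n
  have "eventually (\<lambda>n. a k n < z n \<and> z n < b k n) F" for k
  proof -
    have "eventually (\<lambda>n. Suc k \<le> n) F"
      using F by (rule filter_leD) simp
    moreover have "eventually (\<lambda>n. \<forall>j\<in>{..<Suc k}. step j n) F"
      by (rule eventually_ball_finite) (simp_all add: step_def nested)
    ultimately show ?thesis
    proof eventually_elim
      case (elim n)
      let ?S = "{i. i \<le> n \<and> (\<forall>j<i. step j n)}"
      have "Suc k \<in> ?S"
        using elim by auto
      moreover have "finite ?S"
        by simp
      ultimately have "Suc k \<le> depth n" and steps: "\<forall>j<depth n. step j n"
        unfolding depth_def using Max_in[of ?S] by auto
      then obtain d where d: "depth n = Suc d"
        using Suc_le_D by blast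
      have "a k n \<le> a (depth n) n \<and> b (depth n) n \<le> b k n"
        using \<open>Suc k \<le> depth n\<close> steps unfolding step_def
        by (intro nested_prefix_bounds[of "depth n" "\<lambda>j. a j n" "\<lambda>j. b j n" k]) auto
      moreover have "a (depth n) n < z n \<and> z n < b (depth n) n"
      proof -
        have "a (Suc d) n < b (Suc d) n"
          using steps d unfolding step_def by simp
        then show ?thesis
          unfolding z_def d by (rule someI_ex[OF dense])
      qed
      ultimately show ?case
        by (meson order.strict_trans1 order.strict_trans2)
    qed
  qed
  then show ?thesis
    by blast
qed

theorem mainTheorem4:
  fixes U :: "nat set set"
  assumes "ultrafilter_nat U"
  shows "(\<forall>x y :: 'a::linorder. x < y \<longrightarrow> (\<exists>c. x < c \<and> c < y)) \<longleftrightarrow>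
    (\<forall>a b :: nat \<Rightarrow> nat \<Rightarrow> 'a.
       (\<forall>k. uleq U (ucls U (a k)) (ucls U (a (Suc k))) \<and>
            uless U (ucls U (a (Suc k))) (ucls U (b (Suc k))) \<and>
            uleq U (ucls U (b (Suc k))) (ucls U (b k)))
       \<longrightarrow> (\<Inter>k. uopen_interval U (ucls U (a k)) (ucls U (b k))) \<noteq> {})"
proof (intro iffI allI impI)
  fix a b :: "nat \<Rightarrow> nat \<Rightarrow> 'a"
  assume dense: "\<forall>x y :: 'a. x < y \<longrightarrow> (\<exists>c. x < c \<and> c < y)"
    and "\<forall>k. uleq U (ucls U (a k)) (ucls U (a (Suc k))) \<and>
      uless U (ucls U (a (Suc k))) (ucls U (b (Suc k))) \<and> uleq U (ucls U (b (Suc k))) (ucls U (b k))"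
  then have "\<forall>k. eventually (\<lambda>n. a k n \<le> a (Suc k) n \<and> a (Suc k) n < b (Suc k) n
      \<and> b (Suc k) n \<le> b k n) (ufilter U)"
    by (simp add: uleq_ucls_iff[OF assms] uless_ucls_iff[OF assms] eventually_conj_iff)
  then obtain z where "\<forall>k. eventually (\<lambda>n. a k n < z n \<and> z n < b k n) (ufilter U)"
    using nested_intervals_eventually_common_point[OF _ ufilter_le_sequentially[OF assms]] dense
    by blast
  then have "ucls U z \<in> (\<Inter>k. uopen_interval U (ucls U (a k)) (ucls U (b k)))"
    by (simp add: ucls_in_uopen_interval_iff[OF assms])
  then show "(\<Inter>k. uopen_interval U (ucls U (a k)) (ucls U (b k))) \<noteq> {}"
    by blast
next
  fix x y :: 'a
  assume nested_intervals: "\<forall>a b :: nat \<Rightarrow> nat \<Rightarrow> 'a.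
       (\<forall>k. uleq U (ucls U (a k)) (ucls U (a (Suc k))) \<and>
            uless U (ucls U (a (Suc k))) (ucls U (b (Suc k))) \<and>
            uleq U (ucls U (b (Suc k))) (ucls U (b k)))
       \<longrightarrow> (\<Inter>k. uopen_interval U (ucls U (a k)) (ucls U (b k))) \<noteq> {}"
    and "x < y"
  then have "uopen_interval U (ucls U (\<lambda>n. x)) (ucls U (\<lambda>n. y)) \<noteq> {}"
    using nested_intervals[rule_format, of "\<lambda>k n. x" "\<lambda>k n. y"]
    by (simp add: uleq_ucls_iff[OF assms] uless_ucls_iff[OF assms])
  then obtain z where "eventually (\<lambda>n. x < z n \<and> z n < y) (ufilter U)"
    unfolding uopen_interval_def ultrapower_eq_range_ucls
    by (auto simp: uless_ucls_iff[OF assms] eventually_conj_iff)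
  then show "\<exists>c. x < c \<and> c < y"
    using eventually_happens'[OF ufilter_neq_bot[OF assms]] by blast
qed

end
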